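(* Let $p$ be a prime, $A$ a torsion-free $\mathbb{Z}_{(p)}$-algebra, $\mathfrak a\subseteq A$ a divided-power ideal, $P,Q\in A[X]$ monic, and $N\ge1$. If $e_n(P)\equiv e_n(Q)\pmod{\mathfrak a}$ for all $1\le n\le N$, then $p_N(P)\equiv p_N(Q)\pmod{N\mathfrak a}$.
   Context: An ideal $\mathfrak a$ of a torsion-free $\mathbb{Z}_{(p)}$-algebra $A$ is a divided-power ideal if $a^p\in p\,\mathfrak a$ for all $a\in\mathfrak a$ (equivalently $a^k/k!\in\mathfrak a$ in $A\otimes\mathbb{Q}$ for all $a\in\mathfrak a$, $k\ge1$). For a monic $P=X^d+a_1X^{d-1}+\dots+a_d\in A[X]$: $e_0(P)=1$, $e_n(P)=(-1)^na_n$ for $1\le n\le d$, $e_n(P)=0$ for $n>d$; and $p_n(P)$ for $n\ge1$ is defined by Newton's identities $p_n(P)=\sum_{i=1}^{n-1}(-1)^{i-1}e_i(P)p_{n-i}(P)+(-1)^{n-1}n\,e_n(P)$ (for $A$ a domain, the $n$-th power sum of the roots of $P$ with multiplicity). $N\mathfrak a=\{Na:a\in\mathfrak a\}$. *)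

theory Defs
  imports "HOL-Computational_Algebra.Computational_Algebra"
begin

definition is_ideal :: "'a::comm_ring_1 set \<Rightarrow> bool" where
  "is_ideal I \<longleftrightarrow> 0 \<in> I \<and> (\<forall>x\<in>I. \<forall>y\<in>I. x + y \<in> I) \<and> (\<forall>r. \<forall>x\<in>I. r * x \<in> I)"

definition nat_mult_set :: "nat \<Rightarrow> 'a::comm_ring_1 set \<Rightarrow> 'a set" where
  "nat_mult_set N I = {of_nat N * x | x. x \<in> I}"

definition torsion_free :: "'a::comm_ring_1 itself \<Rightarrow> bool" where
  "torsion_free _ \<longleftrightarrow> (\<forall>(n::nat) (a::'a). n > 0 \<longrightarrow> of_nat n * a = 0 \<longrightarrow> a = 0)"

definition Zp_local_algebra :: "nat \<Rightarrow> 'a::comm_ring_1 itself \<Rightarrow> bool" where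
  "Zp_local_algebra p _ \<longleftrightarrow> (\<forall>n::nat. coprime n p \<longrightarrow> (\<exists>b::'a. of_nat n * b = 1))"

definition dp_ideal :: "nat \<Rightarrow> 'a::comm_ring_1 set \<Rightarrow> bool" where
  "dp_ideal p I \<longleftrightarrow> is_ideal I \<and> (\<forall>a\<in>I. a ^ p \<in> nat_mult_set p I)"

text \<open>e_n(P) for monic P = X^d + a_1 X^(d-1) + ... + a_d: e_0 = 1, e_n = (-1)^n a_n for
  1 <= n <= d, e_n = 0 for n > d.  Here a_n = coeff P (d - n).\<close>
definition esym :: "'a::comm_ring_1 poly \<Rightarrow> nat \<Rightarrow> 'a" where
  "esym P n = (if n = 0 then 1 else if n \<le> degree P then (-1) ^ n * coeff P (degree P - n) else 0)"

text \<open>p_n(P) via Newton's identities (only meaningful for n >= 1).\<close>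
fun psum :: "'a::comm_ring_1 poly \<Rightarrow> nat \<Rightarrow> 'a" where
  "psum P n = (\<Sum>i\<in>{1..<n}. (-1) ^ (i - 1) * esym P i * psum P (n - i))
              + (-1) ^ (n - 1) * of_nat n * esym P n"

declare psum.simps [simp del]

end

theory Submission
  imports Defs
begin

text \<open>
  Write \<open>E\<^sub>P = \<Sum> e\<^sub>n(P) X^n\<close>. Newton's identities say that the logarithmic derivative
  \<open>E\<^sub>P' / E\<^sub>P\<close> is \<open>\<Sum> (-1)^n p\<^sub>n\<^sub>+\<^sub>1(P) X^n\<close>. Replacing \<open>e\<^sub>n(P)\<close> by \<open>e\<^sub>n(Q)\<close> for \<open>n > N\<close> does not
  change \<open>p\<^sub>N(P)\<close> and makes \<open>E\<^sub>P / E\<^sub>Q = 1 + F\<close> with all coefficients of \<open>F\<close> in \<open>\<aa>\<close>; the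
  difference of the logarithmic derivatives is then \<open>F' / (1 + F) = \<Sum>\<^sub>k (-F)^k F'\<close>.
  In a \<open>\<int>\<^sub>(\<^sub>p\<^sub>)\<close>-algebra, \<open>a^p \<in> p\<aa>\<close> implies \<open>a^m \<in> m! \<aa>\<close> for all \<open>m \<ge> 1\<close>, because
  \<open>(pj)! / (p^j j!)\<close> is prime to \<open>p\<close>. So the coefficients of \<open>F^(k+1)\<close> lie in \<open>(k+1)! \<aa>\<close>, and
  \<open>(k+1) F^k F' = (F^(k+1))'\<close> has its coefficient of \<open>X^(N-1)\<close> in \<open>N (k+1)! \<aa>\<close>; cancelling
  \<open>k+1\<close> by torsion-freeness puts the coefficient of \<open>X^(N-1)\<close> of every \<open>(-F)^k F'\<close> in \<open>N\<aa>\<close>.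
\<close>

lemma ideal_zero: "is_ideal I \<Longrightarrow> 0 \<in> I"
  unfolding is_ideal_def by blast

lemma ideal_add: "is_ideal I \<Longrightarrow> x \<in> I \<Longrightarrow> y \<in> I \<Longrightarrow> x + y \<in> I"
  unfolding is_ideal_def by blast

lemma ideal_mult_left: "is_ideal I \<Longrightarrow> x \<in> I \<Longrightarrow> r * x \<in> I"
  unfolding is_ideal_def by blast

lemma ideal_mult_right: "is_ideal I \<Longrightarrow> x \<in> I \<Longrightarrow> x * r \<in> I"
  unfolding is_ideal_def by (metis mult.commute)

lemma ideal_sum: "is_ideal I \<Longrightarrow> (\<And>i. i \<in> S \<Longrightarrow> f i \<in> I) \<Longrightarrow> sum f S \<in> I"
  by (induction S rule: infinite_finite_induct) (simp_all add: ideal_zero ideal_add)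

lemma ideal_nat_mult_set:
  fixes I :: "'a::comm_ring_1 set"
  assumes idl: "is_ideal I"
  shows "is_ideal (nat_mult_set N I)"
  unfolding is_ideal_def
proof (intro conjI ballI allI)
  show "0 \<in> nat_mult_set N I"
    unfolding nat_mult_set_def using ideal_zero[OF idl] by force
next
  fix x y assume "x \<in> nat_mult_set N I" "y \<in> nat_mult_set N I"
  then obtain a b where "a \<in> I" "b \<in> I" "x = of_nat N * a" "y = of_nat N * b"
    unfolding nat_mult_set_def by blast
  then show "x + y \<in> nat_mult_set N I"
    unfolding nat_mult_set_def by (auto simp: distrib_left intro!: exI[of _ "a + b"] ideal_add[OF idl])
next
  fix r x assume "x \<in> nat_mult_set N I"
  then obtain a where "a \<in> I" "x = of_nat N * a"
    unfolding nat_mult_set_def by blast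
  then show "r * x \<in> nat_mult_set N I"
    unfolding nat_mult_set_def
    by (auto simp: mult.left_commute intro!: exI[of _ "r * a"] ideal_mult_left[OF idl])
qed

lemma nat_mult_set_of_nat_mult:
  "x \<in> nat_mult_set k I \<Longrightarrow> of_nat l * x \<in> nat_mult_set (l * k) I"
  unfolding nat_mult_set_def by (auto simp: mult.assoc)

lemma nat_mult_set_mult:
  fixes I :: "'a::comm_ring_1 set"
  assumes idl: "is_ideal I" and "x \<in> nat_mult_set k I" "y \<in> nat_mult_set l I"
  shows "x * y \<in> nat_mult_set (k * l) I"
proof -
  obtain a b where "a \<in> I" "x = of_nat k * a" "y = of_nat l * b"
    using assms unfolding nat_mult_set_def by blast
  then have "x * y = of_nat (k * l) * (a * b)" "a * b \<in> I"
    by (simp_all add: ac_simps ideal_mult_right[OF idl])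
  then show ?thesis unfolding nat_mult_set_def by blast
qed

lemma nat_mult_set_unit_factor:
  fixes x u :: "'a::comm_ring_1"
  assumes "is_ideal I" "of_nat w * u = 1" "x \<in> nat_mult_set k I"
  shows "x \<in> nat_mult_set (w * k) I"
proof -
  have "u * x \<in> nat_mult_set k I"
    using assms by (simp add: ideal_mult_left ideal_nat_mult_set)
  then have "of_nat w * (u * x) \<in> nat_mult_set (w * k) I"
    by (rule nat_mult_set_of_nat_mult)
  then show ?thesis
    using assms(2) by (simp add: mult.assoc[symmetric])
qed

lemma coprime_prime_mult_add:
  fixes p :: nat
  assumes "prime p" "0 < s" "s < p"
  shows "coprime (p * j + s) p"
proof -
  have "\<not> p dvd p * j + s"
    using assms by (simp add: dvd_add_right_iff nat_dvd_not_less)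
  then show ?thesis
    using assms(1) by (simp add: coprime_commute prime_imp_coprime)
qed

lemma fact_mult_add_coprime:
  fixes p :: nat
  assumes "prime p" "r < p"
  shows "\<exists>w. fact (p * j + r) = fact (p * j) * w \<and> coprime w p"
  using assms(2)
proof (induction r)
  case 0
  show ?case by auto
next
  case (Suc r)
  then obtain w where w: "fact (p * j + r) = (fact (p * j) :: nat) * w" "coprime w p"
    by auto
  have "fact (p * j + Suc r) = (fact (p * j) :: nat) * (w * (p * j + Suc r))"
    using w(1) by (simp add: algebra_simps)
  moreover have "coprime (w * (p * j + Suc r)) p"
    using w(2) coprime_prime_mult_add[OF assms(1), of "Suc r" j] Suc.prems
    unfolding coprime_mult_left_iff by blast
  ultimately show ?case by blast
qed

lemma fact_prime_mult:
  fixes p :: nat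
  assumes "prime p"
  shows "\<exists>w. fact (p * j) = p ^ j * fact j * w \<and> coprime w p"
proof (induction j)
  case 0
  show ?case by simp
next
  case (Suc j)
  then obtain w where w: "fact (p * j) = p ^ j * fact j * w" "coprime w p"
    by auto
  have p: "p > 0" using assms prime_gt_0_nat by blast
  obtain v where v: "fact (p * j + (p - 1)) = (fact (p * j) :: nat) * v" "coprime v p"
    using fact_mult_add_coprime[OF assms, of "p - 1" j] p by auto
  have "p * Suc j = Suc (p * j + (p - 1))" using p by simp
  then have "fact (p * Suc j) = p * Suc j * (fact (p * j + (p - 1)) :: nat)"
    by (metis fact_Suc of_nat_id)
  also have "\<dots> = p ^ Suc j * fact (Suc j) * (w * v)"
    using w v by (simp add: algebra_simps)
  finally show ?case using w v by auto
qed

definition has_divided_powers :: "'a::comm_ring_1 set \<Rightarrow> 'a \<Rightarrow> bool" where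
  "has_divided_powers I x \<longleftrightarrow> (\<forall>m\<ge>1. x ^ m \<in> nat_mult_set (fact m) I)"

lemma dp_ideal_has_divided_powers:
  fixes I :: "'a::comm_ring_1 set"
  assumes p: "prime p" and local: "Zp_local_algebra p TYPE('a)" and I: "dp_ideal p I"
  shows "a \<in> I \<Longrightarrow> has_divided_powers I a"
  unfolding has_divided_powers_def
proof (intro allI impI)
  have idl: "is_ideal I" using I unfolding dp_ideal_def by blast
  fix m :: nat
  assume "m \<ge> 1"
  then show "a \<in> I \<Longrightarrow> a ^ m \<in> nat_mult_set (fact m) I"
  proof (induction m arbitrary: a rule: less_induct)
    case (less m)
    show ?case
    proof (cases "p dvd m")
      case False
      then have "coprime m p"
        using p by (metis coprime_commute prime_imp_coprime)
      then obtain u :: 'a where u: "of_nat m * u = 1"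
        using local unfolding Zp_local_algebra_def by blast
      show ?thesis
      proof (cases "m = 1")
        case True
        then show ?thesis using less.prems by (auto simp: nat_mult_set_def)
      next
        case False
        then obtain k where k: "m = Suc k" "k \<ge> 1" using less.prems by (cases m) auto
        then have "a * a ^ k \<in> nat_mult_set (fact k) I"
          using less.IH[of k] less.prems idl by (simp add: ideal_mult_left ideal_nat_mult_set)
        then show ?thesis
          using nat_mult_set_unit_factor[OF idl u] k by simp
      qed
    next
      case True
      then obtain j where j: "m = p * j" by blast
      have "p > 1" using p prime_gt_1_nat by blast
      with j less.prems have j1: "j \<ge> 1" and "j < m"
        by (auto intro: Nat.gr0I)
      obtain c where c: "c \<in> I" "a ^ p = of_nat p * c"
        using I less.prems unfolding dp_ideal_def nat_mult_set_def by blast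
      obtain w where w: "fact m = p ^ j * fact j * w" "coprime w p"
        using fact_prime_mult[OF p, of j] j by blast
      obtain u :: 'a where u: "of_nat w * u = 1"
        using local w(2) unfolding Zp_local_algebra_def by blast
      have "a ^ m = of_nat (p ^ j) * c ^ j"
        by (simp add: j power_mult c(2) power_mult_distrib)
      also have "\<dots> \<in> nat_mult_set (p ^ j * fact j) I"
        using less.IH[OF \<open>j < m\<close> c(1) j1] by (rule nat_mult_set_of_nat_mult)
      finally have "a ^ m \<in> nat_mult_set (w * (p ^ j * fact j)) I"
        by (rule nat_mult_set_unit_factor[OF idl u])
      then show ?thesis
        by (simp add: w(1) mult.commute)
    qed
  qed
qed

lemma has_divided_powers_add:
  fixes I :: "'a::comm_ring_1 set"
  assumes idl: "is_ideal I" and x: "has_divided_powers I x" and y: "has_divided_powers I y"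
  shows "has_divided_powers I (x + y)"
  unfolding has_divided_powers_def
proof (intro allI impI)
  fix m :: nat
  assume m: "m \<ge> 1"
  have "of_nat (m choose k) * x ^ k * y ^ (m - k) \<in> nat_mult_set (fact m) I" if "k \<le> m" for k
  proof -
    have fact_m: "fact m = (m choose k) * (fact k * fact (m - k))"
      using binomial_fact_lemma[OF \<open>k \<le> m\<close>] by (simp add: algebra_simps)
    consider "k = 0" | "k = m" | "1 \<le> k" "1 \<le> m - k"
      using \<open>k \<le> m\<close> by linarith
    then show ?thesis
    proof cases
      case 1
      then show ?thesis using y m unfolding has_divided_powers_def by simp
    next
      case 2
      then show ?thesis using x m unfolding has_divided_powers_def by simp
    next
      case 3
      then have "x ^ k * y ^ (m - k) \<in> nat_mult_set (fact k * fact (m - k)) I"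
        using x y idl by (simp add: has_divided_powers_def nat_mult_set_mult)
      then show ?thesis
        unfolding fact_m mult.assoc by (rule nat_mult_set_of_nat_mult)
    qed
  qed
  then show "(x + y) ^ m \<in> nat_mult_set (fact m) I"
    unfolding binomial_ring by (intro ideal_sum ideal_nat_mult_set idl) simp
qed

lemma has_divided_powers_sum:
  "is_ideal I \<Longrightarrow> (\<And>i. i \<in> S \<Longrightarrow> has_divided_powers I (f i)) \<Longrightarrow> has_divided_powers I (sum f S)"
proof (induction S rule: infinite_finite_induct)
  case (insert i S)
  then show ?case by (simp add: has_divided_powers_add)
qed (auto simp: has_divided_powers_def power_0_left ideal_zero ideal_nat_mult_set)

definition fps_over :: "'a::comm_ring_1 set \<Rightarrow> 'a fps set" where
  "fps_over I = {F. \<forall>n. F $ n \<in> I}"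

lemma ideal_fps_over: "is_ideal I \<Longrightarrow> is_ideal (fps_over I)"
  unfolding is_ideal_def fps_over_def
  by (auto simp: fps_mult_nth simp del: fps_mult_nth_0
           intro!: ideal_sum[unfolded is_ideal_def] ideal_mult_left[unfolded is_ideal_def])

lemma has_divided_powers_fps_monom:
  fixes I :: "'a::comm_ring_1 set"
  assumes idl: "is_ideal I" and c: "has_divided_powers I c"
  shows "has_divided_powers (fps_over I) (fps_const c * fps_X ^ i)"
  unfolding has_divided_powers_def
proof (intro allI impI)
  fix m :: nat
  assume "m \<ge> 1"
  then obtain y where y: "y \<in> I" "c ^ m = of_nat (fact m) * y"
    using c unfolding has_divided_powers_def nat_mult_set_def by blast
  have "(fps_const c * fps_X ^ i) ^ m = fps_const (of_nat (fact m)) * (fps_const y * fps_X ^ (i * m))"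
    by (simp add: power_mult_distrib power_mult y(2) ac_simps)
  moreover have "fps_const y * fps_X ^ (i * m) \<in> fps_over I"
    using y(1) ideal_zero[OF idl] by (auto simp: fps_over_def)
  ultimately show "(fps_const c * fps_X ^ i) ^ m \<in> nat_mult_set (fact m) (fps_over I)"
    unfolding nat_mult_set_def fps_of_nat by blast
qed

lemma fps_cutoff_eq_sum: "fps_cutoff n F = (\<Sum>i<n. fps_const (F $ i) * fps_X ^ i)"
  by (simp add: fps_eq_iff fps_sum_nth if_distrib cong: if_cong)

lemma fps_cutoff_power_nth: "k < n \<Longrightarrow> (fps_cutoff n F ^ m) $ k = (F ^ m) $ k"
proof (induction m arbitrary: k)
  case (Suc m)
  have "(fps_cutoff n F ^ Suc m) $ k = (\<Sum>j=0..k. fps_cutoff n F $ j * (fps_cutoff n F ^ m) $ (k - j))"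
    by (simp add: fps_mult_nth)
  also have "\<dots> = (\<Sum>j=0..k. F $ j * (F ^ m) $ (k - j))"
    using Suc by (intro sum.cong) auto
  also have "\<dots> = (F ^ Suc m) $ k"
    by (simp add: fps_mult_nth)
  finally show ?case .
qed simp

lemma fps_power_nth_in:
  fixes I :: "'a::comm_ring_1 set"
  assumes idl: "is_ideal I" and dp: "\<forall>a\<in>I. has_divided_powers I a"
    and F: "F \<in> fps_over I" and m: "m \<ge> 1"
  shows "(F ^ m) $ n \<in> nat_mult_set (fact m) I"
proof -
  \<comment> \<open>Divided powers are only known to be closed under finite sums, hence the truncation.\<close>
  have "has_divided_powers (fps_over I) (fps_cutoff (Suc n) F)"
    unfolding fps_cutoff_eq_sum using F dp
    by (intro has_divided_powers_sum has_divided_powers_fps_monom ideal_fps_over idl)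
       (auto simp: fps_over_def)
  then obtain G where "G \<in> fps_over I" "fps_cutoff (Suc n) F ^ m = fps_const (of_nat (fact m)) * G"
    using m unfolding has_divided_powers_def nat_mult_set_def fps_of_nat by blast
  then show ?thesis
    using fps_cutoff_power_nth[of n "Suc n" F m]
    by (auto simp: nat_mult_set_def fps_over_def intro!: exI[of _ "G $ n"])
qed

lemma torsion_free_mult_cancel:
  fixes a b :: "'a::comm_ring_1"
  assumes "torsion_free TYPE('a)" "k > 0" "of_nat k * a = of_nat k * b"
  shows "a = b"
proof -
  have "of_nat k * (a - b) = 0" using assms(3) by (simp add: algebra_simps)
  then have "a - b = 0" using assms(1,2) unfolding torsion_free_def by blast
  then show ?thesis by simp
qed

lemma fps_power_mult_deriv_nth_in:
  fixes I :: "'a::comm_ring_1 set"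
  assumes tf: "torsion_free TYPE('a)" and idl: "is_ideal I"
    and dp: "\<forall>a\<in>I. has_divided_powers I a" and F: "F \<in> fps_over I"
  shows "(F ^ k * fps_deriv F) $ n \<in> nat_mult_set (n + 1) I"
proof -
  obtain y where y: "y \<in> I" "(F ^ (k + 1)) $ (n + 1) = of_nat (fact (k + 1)) * y"
    using fps_power_nth_in[OF idl dp F, of "k + 1" "n + 1"] by (auto simp: nat_mult_set_def)
  have "fps_deriv (F ^ (k + 1)) = fps_const (of_nat (k + 1)) * (F ^ k * fps_deriv F)"
    unfolding fps_deriv_power by (simp only: add_diff_cancel_right' mult_ac)
  then have "of_nat (k + 1) * (F ^ k * fps_deriv F) $ n = fps_deriv (F ^ (k + 1)) $ n"
    by simp
  also have "\<dots> = of_nat (n + 1) * (F ^ (k + 1)) $ (n + 1)"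
    by (rule fps_deriv_nth)
  also have "\<dots> = of_nat (k + 1) * (of_nat (n + 1) * (of_nat (fact k) * y))"
    unfolding y(2) fact_Suc[of k, unfolded Suc_eq_plus1] by (simp only: of_nat_id of_nat_mult mult_ac)
  finally have "(F ^ k * fps_deriv F) $ n = of_nat (n + 1) * (of_nat (fact k) * y)"
    using torsion_free_mult_cancel[OF tf, of "k + 1"] by simp
  moreover have "of_nat (fact k) * y \<in> I"
    using ideal_mult_left[OF idl y(1)] .
  ultimately show ?thesis
    unfolding nat_mult_set_def by blast
qed

lemma fps_nth_eq_geometric_sum:
  fixes F G T :: "'a::comm_ring_1 fps"
  assumes F0: "F $ 0 = 0" and T: "(1 + F) * T = G"
  shows "T $ n = (\<Sum>k\<le>n. ((- F) ^ k * G) $ n)"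
proof -
  define S where "S = (\<Sum>k\<le>n. (- F) ^ k)"
  have "(1 + F) * S = 1 - (- F) ^ Suc n"
    using one_diff_power_eq[of "- F" "Suc n"] by (simp add: S_def lessThan_Suc_atMost)
  then have "S * G = T - (- F) ^ Suc n * T"
    unfolding T[symmetric] by (simp only: mult.assoc[symmetric] mult.commute[of S]) (simp add: algebra_simps)
  moreover have "((- F) ^ Suc n * T) $ n = 0"
    using startsby_zero_power_prefix[of "- F" "Suc n"] F0
    by (simp add: fps_mult_nth del: power_Suc)
  ultimately have "T $ n = (S * G) $ n"
    by simp
  then show ?thesis
    by (simp only: S_def sum_distrib_right fps_sum_nth)
qed

lemma fps_log_deriv_nth_in:
  fixes I :: "'a::comm_ring_1 set"
  assumes tf: "torsion_free TYPE('a)" and idl: "is_ideal I"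
    and dp: "\<forall>a\<in>I. has_divided_powers I a"
    and F: "F \<in> fps_over I" and F0: "F $ 0 = 0" and T: "(1 + F) * T = fps_deriv F"
  shows "T $ n \<in> nat_mult_set (n + 1) I"
proof -
  have "- F \<in> fps_over I"
    using F ideal_mult_left[OF idl, where r = "-1"] by (auto simp: fps_over_def)
  then have "- ((- F) ^ k * fps_deriv (- F)) $ n \<in> nat_mult_set (n + 1) I" for k
    using fps_power_mult_deriv_nth_in[OF tf idl dp] ideal_mult_left[OF ideal_nat_mult_set[OF idl], where r = "-1"]
    by fastforce
  then have "(\<Sum>k\<le>n. ((- F) ^ k * fps_deriv F) $ n) \<in> nat_mult_set (n + 1) I"
    by (intro ideal_sum ideal_nat_mult_set idl) simp
  then show ?thesis
    by (simp only: fps_nth_eq_geometric_sum[OF F0 T])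
qed

fun psum_seq :: "(nat \<Rightarrow> 'a::comm_ring_1) \<Rightarrow> nat \<Rightarrow> 'a" where
  "psum_seq e n = (\<Sum>i\<in>{1..<n}. (-1) ^ (i - 1) * e i * psum_seq e (n - i))
                  + (-1) ^ (n - 1) * of_nat n * e n"

declare psum_seq.simps [simp del]

lemma psum_eq_psum_seq: "psum P n = psum_seq (esym P) n"
proof (induction n rule: less_induct)
  case (less n)
  then show ?case
    by (subst psum.simps, subst psum_seq.simps) (intro arg_cong2[where f = "(+)"] sum.cong refl; simp)
qed

lemma psum_seq_cong: "(\<And>i. i \<le> n \<Longrightarrow> e i = e' i) \<Longrightarrow> psum_seq e n = psum_seq e' n"
proof (induction n rule: less_induct)
  case (less n)
  then show ?case
    by (subst (1 2) psum_seq.simps) (intro arg_cong2[where f = "(+)"] sum.cong refl; simp)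
qed

lemma minus_one_power_diff:
  assumes "1 \<le> i" "i \<le> n"
  shows "(-1 :: 'a::comm_ring_1) ^ (n - i) = - ((-1) ^ n * (-1) ^ (i - 1))"
proof -
  define d j where "d = n - i" and "j = i - 1"
  have n: "n = d + j + 1" using assms by (simp add: d_def j_def)
  have "(-1 :: 'a) ^ j * (-1) ^ j = 1"
    by (simp add: power_mult_distrib[symmetric])
  moreover have "(-1 :: 'a) ^ n * (-1) ^ j = - ((-1) ^ d * ((-1) ^ j * (-1) ^ j))"
    unfolding n power_add by (simp add: ac_simps)
  ultimately show ?thesis by (simp add: d_def j_def mult.assoc)
qed

lemma fps_deriv_eq_mult_psum_seq:
  fixes e :: "nat \<Rightarrow> 'a::comm_ring_1"
  assumes e0: "e 0 = 1"
  shows "fps_deriv (Abs_fps e) = Abs_fps e * Abs_fps (\<lambda>n. (-1) ^ n * psum_seq e (n + 1))"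
proof (rule fps_ext)
  fix n
  define \<Sigma> where "\<Sigma> = (\<Sum>i=1..n. (-1) ^ (i - 1) * e i * psum_seq e (Suc n - i))"
  have rec: "psum_seq e (Suc n) = \<Sigma> + (-1) ^ n * of_nat (Suc n) * e (Suc n)"
    unfolding \<Sigma>_def by (subst psum_seq.simps) (simp add: atLeastLessThanSuc_atLeastAtMost)
  have "(\<Sum>i=1..n. e i * ((-1) ^ (n - i) * psum_seq e (n - i + 1))) = - ((-1) ^ n * \<Sigma>)"
    unfolding \<Sigma>_def sum_distrib_left sum_negf[symmetric]
    by (intro sum.cong refl) (simp add: minus_one_power_diff Suc_diff_le algebra_simps)
  then have "(Abs_fps e * Abs_fps (\<lambda>n. (-1) ^ n * psum_seq e (n + 1))) $ n
      = (-1) ^ n * psum_seq e (Suc n) - (-1) ^ n * \<Sigma>"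
    using e0 by (simp add: fps_mult_nth sum.atLeast_Suc_atMost)
  also have "\<dots> = ((-1) ^ n * (-1) ^ n) * of_nat (Suc n) * e (Suc n)"
    unfolding rec by (simp add: algebra_simps)
  also have "\<dots> = fps_deriv (Abs_fps e) $ n"
    by (simp add: power_mult_distrib[symmetric])
  finally show "fps_deriv (Abs_fps e) $ n = (Abs_fps e * Abs_fps (\<lambda>n. (-1) ^ n * psum_seq e (n + 1))) $ n" ..
qed

lemma psum_seq_diff_in:
  fixes I :: "'a::comm_ring_1 set" and e e' :: "nat \<Rightarrow> 'a"
  assumes tf: "torsion_free TYPE('a)" and idl: "is_ideal I"
    and dp: "\<forall>a\<in>I. has_divided_powers I a"
    and e0: "e 0 = 1" and e'0: "e' 0 = 1" and e_diff: "\<And>n. e n - e' n \<in> I" and N: "N \<ge> 1"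
  shows "psum_seq e N - psum_seq e' N \<in> nat_mult_set N I"
proof -
  define E E' where "E = Abs_fps e" and "E' = Abs_fps e'"
  define S S' where "S = Abs_fps (\<lambda>n. (-1) ^ n * psum_seq e (n + 1))"
    and "S' = Abs_fps (\<lambda>n. (-1) ^ n * psum_seq e' (n + 1))"
  have E: "fps_deriv E = E * S" and E': "fps_deriv E' = E' * S'"
    unfolding E_def E'_def S_def S'_def using e0 e'0 by (simp_all add: fps_deriv_eq_mult_psum_seq)
  define G where "G = fps_right_inverse E' 1"
  have G: "E' * G = 1"
    unfolding G_def by (rule fps_right_inverse) (simp add: E'_def e'0)
  have G': "fps_deriv G = - (S' * G)"
  proof -
    have "0 = G * fps_deriv (E' * G)" using G by simp
    also have "\<dots> = S' * G * (E' * G) + (E' * G) * fps_deriv G"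
      unfolding fps_deriv_mult E' by (simp add: algebra_simps)
    finally show ?thesis using G by (simp add: eq_neg_iff_add_eq_0 add.commute)
  qed
  define F where "F = (E - E') * G"
  have F1: "1 + F = E * G"
    unfolding F_def using G by (simp add: algebra_simps)
  have "F $ n \<in> I" for n
    unfolding F_def fps_mult_nth
    by (intro ideal_sum[OF idl] ideal_mult_right[OF idl]) (simp add: E_def E'_def e_diff)
  then have "F \<in> fps_over I"
    unfolding fps_over_def by blast
  moreover have "F $ 0 = 0"
    unfolding F_def by (simp add: E_def E'_def e0 e'0)
  moreover have "(1 + F) * (S - S') = fps_deriv F"
  proof -
    have "fps_deriv F = fps_deriv (1 + F)" by simp
    also have "\<dots> = (1 + F) * (S - S')"
      unfolding F1 fps_deriv_mult E G' by (simp add: algebra_simps)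
    finally show ?thesis ..
  qed
  ultimately have "(S - S') $ (N - 1) \<in> nat_mult_set N I"
    using fps_log_deriv_nth_in[OF tf idl dp, of F "S - S'" "N - 1"] N by simp
  then have "(-1) ^ (N - 1) * (S - S') $ (N - 1) \<in> nat_mult_set N I"
    by (rule ideal_mult_left[OF ideal_nat_mult_set[OF idl]])
  moreover have "(-1) ^ (N - 1) * (S - S') $ (N - 1) = psum_seq e N - psum_seq e' N"
    using N by (simp add: S_def S'_def algebra_simps power_mult_distrib[symmetric])
  ultimately show ?thesis by simp
qed

theorem proposition2p9:
  fixes p N :: nat and \<aa> :: "'a::comm_ring_1 set" and P Q :: "'a poly"
  assumes "prime p"
    and "torsion_free TYPE('a)"
    and "Zp_local_algebra p TYPE('a)"
    and "dp_ideal p \<aa>"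
    and "lead_coeff P = 1" and "lead_coeff Q = 1"
    and "N \<ge> 1"
    and "\<forall>n\<in>{1..N}. esym P n - esym Q n \<in> \<aa>"
  shows "psum P N - psum Q N \<in> nat_mult_set N \<aa>"
proof -
  have idl: "is_ideal \<aa>"
    using assms(4) unfolding dp_ideal_def by blast
  have dp: "\<forall>a\<in>\<aa>. has_divided_powers \<aa> a"
    using dp_ideal_has_divided_powers[OF assms(1,3,4)] by blast
  define e where "e n = (if n \<le> N then esym P n else esym Q n)" for n
  have "e n - esym Q n \<in> \<aa>" for n
    using assms(8) ideal_zero[OF idl] by (cases "n = 0 \<or> N < n") (auto simp: e_def esym_def)
  then have "psum_seq e N - psum_seq (esym Q) N \<in> nat_mult_set N \<aa>"
    by (intro psum_seq_diff_in[OF assms(2) idl dp _ _ _ assms(7)]) (simp_all add: e_def esym_def)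
  moreover have "psum_seq e N = psum P N"
    unfolding psum_eq_psum_seq by (rule psum_seq_cong) (simp add: e_def)
  ultimately show ?thesis
    by (simp add: psum_eq_psum_seq)
qed

end
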